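(* Let $\mathfrak A$ be an associative $\mathcal A$-algebra with finite basis $B$ compatible with $1$ satisfying $P_1,P_2,P_3$, and let $\Phi:\mathfrak A\to\mathcal A\otimes_{\mathbb Z}\mathfrak A^\infty$ be as below (an $\mathcal A$-algebra homomorphism preserving $1$). Let $K$ be a field and $\mathcal A\to K$ a unital ring homomorphism; let $\Phi_K:\mathfrak A_K=K\otimes_{\mathcal A}\mathfrak A\to\mathfrak A^\infty_K=K\otimes_{\mathbb Z}\mathfrak A^\infty$ be the induced $K$-algebra homomorphism. If $\mathfrak A_K$ is a semisimple algebra, then $\Phi_K$ is an algebra isomorphism.
   Context: $\mathcal A=\mathbb Z[v,v^{-1}]$. $B$ compatible with $1$: $1=\sum_\mu1_\mu$ with distinct $1_\mu\in B$, orthogonal idempotents, and each $b\in B$ equal to $1_\mu b1_{\mu'}$ for some $\mu,\mu'$. Structure constants $r^{b''}_{b,b'}$ by $bb'=\sum r^{b''}_{b,b'}b''$. $b'\preceq b$ iff $b'$ lies in every $K\subset B$ containing $b$ whose $\mathcal A$-span is a two-sided ideal; two-sided cells: classes of $b\sim b'\iff b\preceq b'\preceq b$. $a(b)$: least $m\ge0$ with $v^{-m}r^{b''}_{b,b'}\in\mathbb Z[v^{-1}]$ for all $b',b''$ in the cell of $b$. $P_1$: $a$ constant on cells. $\mathfrak A^\infty$: ring with $\mathbb Z$-basis $t_b$, $t_bt_{b'}=\sum\gamma^{b''}_{b,b'}t_{b''}$ where $\gamma^{b''}_{b,b'}$ is the constant term of $v^{-a(b)}r^{b''}_{b,b'}$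 if $b,b',b''$ lie in one cell and $0$ otherwise. $P_2$: $\mathfrak A^\infty$ has unit $\sum_{b\in\mathcal D}t_b$, $\mathcal D\subset B$ (distinguished elements), compatible with the basis. $P_3$: for $b_2\sim b_4$, $\sum_{\beta\sim b_2}r^\beta_{b_1,b_2}(v)r^{b_4}_{\beta,b_3}(v')=\sum_{\beta\sim b_2}r^{b_4}_{b_1,\beta}(v)r^\beta_{b_2,b_3}(v')$. $\Phi(b)=\sum_{b_1\in\mathcal D,b_2\in B,b_1\sim b_2}r^{b_2}_{b,b_1}t_{b_2}$, extended $\mathcal A$-linearly. *)

theory Defs
  imports "HOL-Computational_Algebra.Formal_Laurent_Series" "HOL-Library.Function_Algebras"
begin

text \<open>The ring Z[v,v^-1] is modelled as the subring of Laurent polynomials inside the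
  integer formal Laurent series (variable v = fls_X).\<close>
definition laurent :: "int fls set" where
  "laurent = {f. finite {n. fls_nth f n \<noteq> 0}}"

definition bvec :: "'b \<Rightarrow> 'b \<Rightarrow> 'k::zero_neq_one" where
  "bvec b = (\<lambda>c. if c = b then 1 else 0)"

definition indic :: "'b set \<Rightarrow> 'b \<Rightarrow> 'k::zero_neq_one" where
  "indic U = (\<lambda>c. if c \<in> U then 1 else 0)"

text \<open>Multiplication of the free module with basis 'b and structure constants c:
  b * b' = sum_b'' c b b' b'' b''.\<close>
definition amult :: "('b::finite \<Rightarrow> 'b \<Rightarrow> 'b \<Rightarrow> 'k::comm_ring_1) \<Rightarrow> ('b \<Rightarrow> 'k) \<Rightarrow> ('b \<Rightarrow> 'k) \<Rightarrow> ('b \<Rightarrow> 'k)" where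
  "amult c x y = (\<lambda>b''. \<Sum>b\<in>UNIV. \<Sum>b'\<in>UNIV. x b * y b' * c b b' b'')"

text \<open>Basis compatible with 1 (the unit is the sum of the basis elements in U), where S is the
  carrier of the algebra.\<close>
definition compat_one :: "('b::finite \<Rightarrow> 'b \<Rightarrow> 'b \<Rightarrow> 'k::comm_ring_1) \<Rightarrow> ('b \<Rightarrow> 'k) set \<Rightarrow> 'b set \<Rightarrow> bool" where
  "compat_one c S U \<longleftrightarrow>
     (\<forall>x\<in>S. amult c (indic U) x = x \<and> amult c x (indic U) = x) \<and>
     (\<forall>\<mu>\<in>U. \<forall>\<mu>'\<in>U. amult c (bvec \<mu>) (bvec \<mu>') = (if \<mu> = \<mu>' then bvec \<mu> else 0)) \<and>
     (\<forall>b. \<exists>\<mu>\<in>U. \<exists>\<mu>'\<in>U. bvec b = amult c (amult c (bvec \<mu>) (bvec b)) (bvec \<mu>'))"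

definition Aelts :: "('b \<Rightarrow> int fls) set" where
  "Aelts = {x. \<forall>b. x b \<in> laurent}"

definition lspan :: "'b set \<Rightarrow> ('b \<Rightarrow> int fls) set" where
  "lspan K = {x. (\<forall>b. x b \<in> laurent) \<and> (\<forall>b. b \<notin> K \<longrightarrow> x b = 0)}"

definition span_is_ideal :: "('b::finite \<Rightarrow> 'b \<Rightarrow> 'b \<Rightarrow> int fls) \<Rightarrow> 'b set \<Rightarrow> bool" where
  "span_is_ideal r K \<longleftrightarrow>
     (\<forall>x\<in>lspan K. \<forall>y\<in>Aelts. amult r x y \<in> lspan K \<and> amult r y x \<in> lspan K)"

definition cle :: "('b::finite \<Rightarrow> 'b \<Rightarrow> 'b \<Rightarrow> int fls) \<Rightarrow> 'b \<Rightarrow> 'b \<Rightarrow> bool" where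
  "cle r b' b \<longleftrightarrow> (\<forall>K. b \<in> K \<and> span_is_ideal r K \<longrightarrow> b' \<in> K)"

definition cellrel :: "('b::finite \<Rightarrow> 'b \<Rightarrow> 'b \<Rightarrow> int fls) \<Rightarrow> 'b \<Rightarrow> 'b \<Rightarrow> bool" where
  "cellrel r b b' \<longleftrightarrow> cle r b b' \<and> cle r b' b"

text \<open>a-function: least m with v^(-m) r in Z[v^-1] for b', b'' in the cell of b.\<close>
definition afun :: "('b::finite \<Rightarrow> 'b \<Rightarrow> 'b \<Rightarrow> int fls) \<Rightarrow> 'b \<Rightarrow> nat" where
  "afun r b = (LEAST m::nat. \<forall>b' b''. cellrel r b b' \<and> cellrel r b b'' \<longrightarrow>
       (\<forall>k>0. fls_nth (fls_shift (int m) (r b b' b'')) k = 0))"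

definition P1 :: "('b::finite \<Rightarrow> 'b \<Rightarrow> 'b \<Rightarrow> int fls) \<Rightarrow> bool" where
  "P1 r \<longleftrightarrow> (\<forall>b b'. cellrel r b b' \<longrightarrow> afun r b = afun r b')"

definition gam :: "('b::finite \<Rightarrow> 'b \<Rightarrow> 'b \<Rightarrow> int fls) \<Rightarrow> 'b \<Rightarrow> 'b \<Rightarrow> 'b \<Rightarrow> int" where
  "gam r b b' b'' = (if cellrel r b b' \<and> cellrel r b b''
      then fls_nth (fls_shift (int (afun r b)) (r b b' b'')) 0 else 0)"

definition P2 :: "('b::finite \<Rightarrow> 'b \<Rightarrow> 'b \<Rightarrow> int fls) \<Rightarrow> 'b set \<Rightarrow> bool" where
  "P2 r D \<longleftrightarrow> compat_one (gam r) UNIV D"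

text \<open>Two embeddings of Z[v,v^-1] into Z[v,v^-1,v',v'^-1] (modelled as Laurent series in v'
  with coefficients Laurent series in v): f \<mapsto> f(v) and f \<mapsto> f(v').\<close>
definition ev_v :: "int fls \<Rightarrow> int fls fls" where
  "ev_v f = fls_const f"

definition ev_v' :: "int fls \<Rightarrow> int fls fls" where
  "ev_v' f = (\<Sum>j\<in>{n. fls_nth f n \<noteq> 0}. fls_const (fls_const (fls_nth f j)) * fls_X_intpow j)"

definition P3 :: "('b::finite \<Rightarrow> 'b \<Rightarrow> 'b \<Rightarrow> int fls) \<Rightarrow> bool" where
  "P3 r \<longleftrightarrow> (\<forall>b1 b2 b3 b4. cellrel r b2 b4 \<longrightarrow>
     (\<Sum>\<beta>\<in>{\<beta>. cellrel r \<beta> b2}. ev_v (r b1 b2 \<beta>) * ev_v' (r \<beta> b3 b4)) =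
     (\<Sum>\<beta>\<in>{\<beta>. cellrel r \<beta> b2}. ev_v (r b1 \<beta> b4) * ev_v' (r b2 b3 \<beta>)))"

definition laurent_hom :: "(int fls \<Rightarrow> 'K::field) \<Rightarrow> bool" where
  "laurent_hom \<phi> \<longleftrightarrow> \<phi> 1 = 1 \<and>
     (\<forall>a\<in>laurent. \<forall>b\<in>laurent. \<phi> (a + b) = \<phi> a + \<phi> b \<and> \<phi> (a * b) = \<phi> a * \<phi> b)"

text \<open>Phi_K: K (x)_A A \<rightarrow> K (x)_Z A^infinity, on coefficient vectors w.r.t. B resp. (t_b).\<close>
definition PhiK :: "(int fls \<Rightarrow> 'K::field) \<Rightarrow> ('b::finite \<Rightarrow> 'b \<Rightarrow> 'b \<Rightarrow> int fls) \<Rightarrow> 'b set \<Rightarrow> ('b \<Rightarrow> 'K) \<Rightarrow> ('b \<Rightarrow> 'K)" where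
  "PhiK \<phi> r D x = (\<lambda>b2. \<Sum>b\<in>UNIV. x b * (\<Sum>b1\<in>{b1\<in>D. cellrel r b1 b2}. \<phi> (r b b1 b2)))"

definition left_ideal :: "('b::finite \<Rightarrow> 'b \<Rightarrow> 'b \<Rightarrow> 'K::field) \<Rightarrow> ('b \<Rightarrow> 'K) set \<Rightarrow> bool" where
  "left_ideal c I \<longleftrightarrow> 0 \<in> I \<and> (\<forall>x\<in>I. \<forall>y\<in>I. x + y \<in> I) \<and>
     (\<forall>x\<in>I. \<forall>a. (\<lambda>b. a * x b) \<in> I) \<and> (\<forall>x\<in>I. \<forall>y. amult c y x \<in> I)"

definition semisimple :: "('b::finite \<Rightarrow> 'b \<Rightarrow> 'b \<Rightarrow> 'K::field) \<Rightarrow> bool" where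
  "semisimple c \<longleftrightarrow> (\<forall>I. left_ideal c I \<longrightarrow>
     (\<exists>J. left_ideal c J \<and> I \<inter> J = {0} \<and> (\<forall>x. \<exists>u\<in>I. \<exists>w\<in>J. x = u + w)))"

end

theory Submission
  imports Defs "HOL-Analysis.Cartesian_Space"
begin

text \<open>The specialized algebra \<open>A\<^sub>K\<close> acts on \<open>J\<^sub>K = K \<otimes> A\<^sup>\<infinity>\<close> by its regular
  representation truncated to two-sided cells, \<open>b \<cdot> t\<^sub>c = \<Sum>\<^sub>\<beta> \<phi>(r\<^sup>\<beta>\<^sub>b\<^sub>c) t\<^sub>\<beta>\<close>
  with \<open>\<beta>\<close> ranging over the cell of \<open>c\<close>. Since \<open>r\<^sup>\<beta>\<^sub>b\<^sub>c \<noteq> 0\<close> forces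
  \<open>\<beta> \<preceq> c\<close>, this is an action, and \<open>P\<^sub>3\<close> together with \<open>P\<^sub>1\<close> (comparing coefficients of
  \<open>v'\<^sup>a\<close>) says that it commutes with right multiplication in \<open>J\<^sub>K\<close>. Hence
  \<open>x \<cdot> z = \<Phi>\<^sub>K(x) z\<close> with \<open>\<Phi>\<^sub>K(x) = x \<cdot> 1\<close>, so \<open>\<Phi>\<^sub>K\<close> is multiplicative.
  If \<open>\<Phi>\<^sub>K(u) = 0\<close>, left multiplication by \<open>u\<close> maps \<open>b\<close> into the span of strictly lower
  cells, so an idempotent in the kernel is zero. In a semisimple algebra the kernel, a left
  ideal, has an idempotent right unit; so \<open>\<Phi>\<^sub>K\<close> is injective, hence bijective as a
  linear endomorphism of \<open>K\<^sup>B\<close>.\<close>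

section \<open>Algebras given by structure constants\<close>

lemma amult_add_left: "amult c (x + y) z = amult c x z + amult c y z"
  unfolding amult_def by (auto simp: algebra_simps sum.distrib)

lemma amult_add_right: "amult c x (y + z) = amult c x y + amult c x z"
  unfolding amult_def by (auto simp: algebra_simps sum.distrib)

lemma amult_diff_left: "amult c (x - y) z = amult c x z - amult c y z"
  unfolding amult_def by (auto simp: algebra_simps sum_subtractf)

lemma amult_scale_left: "amult c (\<lambda>b. a * x b) z = (\<lambda>b. a * amult c x z b)"
  unfolding amult_def by (auto simp: algebra_simps sum_distrib_left)

lemma amult_zero_left [simp]: "amult c 0 z = 0"
  unfolding amult_def by auto

lemma amult_zero_right [simp]: "amult c x 0 = 0"
  unfolding amult_def by auto

lemma amult_bvec_right: "amult c x (bvec b) e = (\<Sum>a\<in>UNIV. x a * c a b e)"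
  unfolding amult_def bvec_def by (simp add: if_distrib if_distribR cong: if_cong)

lemma amult_bvec_left: "amult c (bvec a) y e = (\<Sum>b\<in>UNIV. y b * c a b e)"
  unfolding amult_def bvec_def by (subst sum.swap) (simp add: if_distrib if_distribR cong: if_cong)

lemma amult_bvec_bvec: "amult c (bvec a) (bvec b) = c a b"
proof
  fix e
  have "bvec b x * c a x e = (if x = b then c a b e else 0)" for x
    by (simp add: bvec_def)
  then show "amult c (bvec a) (bvec b) e = c a b e"
    by (simp add: amult_bvec_left)
qed

lemma amult_left_apply: "amult c x y e = (\<Sum>b\<in>UNIV. y b * (\<Sum>a\<in>UNIV. x a * c a b e))"
  unfolding amult_def by (subst sum.swap) (simp add: sum_distrib_left ac_simps)

lemma amult_right_apply: "amult c x y e = (\<Sum>a\<in>UNIV. x a * (\<Sum>b\<in>UNIV. y b * c a b e))"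
  unfolding amult_def by (simp add: sum_distrib_left ac_simps)

lemma sum_swap_inner:
  "(\<Sum>x\<in>A. \<Sum>y\<in>B. \<Sum>z\<in>C. f x y z) = (\<Sum>x\<in>A. \<Sum>z\<in>C. \<Sum>y\<in>B. f x y z)"
  by (rule sum.cong, simp, rule sum.swap)

lemma sum_reverse4:
  "(\<Sum>p\<in>A. \<Sum>d\<in>B. \<Sum>a\<in>C. \<Sum>b\<in>E. f p d a b) = (\<Sum>a\<in>C. \<Sum>b\<in>E. \<Sum>d\<in>B. \<Sum>p\<in>A. f p d a b)"
proof -
  have "(\<Sum>p\<in>A. \<Sum>d\<in>B. \<Sum>a\<in>C. \<Sum>b\<in>E. f p d a b) = (\<Sum>p\<in>A. \<Sum>a\<in>C. \<Sum>b\<in>E. \<Sum>d\<in>B. f p d a b)"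
    by (rule trans[OF sum_swap_inner sum.cong[OF refl sum_swap_inner]])
  also have "\<dots> = (\<Sum>a\<in>C. \<Sum>b\<in>E. \<Sum>p\<in>A. \<Sum>d\<in>B. f p d a b)"
    by (rule trans[OF sum.swap sum_swap_inner])
  also have "\<dots> = (\<Sum>a\<in>C. \<Sum>b\<in>E. \<Sum>d\<in>B. \<Sum>p\<in>A. f p d a b)"
    by (rule sum.cong[OF refl sum_swap_inner])
  finally show ?thesis .
qed

text \<open>Four sets of structure constants, so that the lemma also gives associativity of a module
  action and of a bimodule.\<close>
lemma amult_assoc_by_constants:
  fixes c1 c2 c3 c4 :: "'b::finite \<Rightarrow> 'b \<Rightarrow> 'b \<Rightarrow> 'k::comm_ring_1"
  assumes "\<And>a b d e. (\<Sum>p\<in>UNIV. c1 a b p * c2 p d e) = (\<Sum>q\<in>UNIV. c3 b d q * c4 a q e)"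
  shows "amult c2 (amult c1 x y) z = amult c4 x (amult c3 y z)"
proof
  fix e
  let ?t = "\<lambda>a b d. x a * y b * z d"
  have "amult c2 (amult c1 x y) z e
      = (\<Sum>p\<in>UNIV. \<Sum>d\<in>UNIV. \<Sum>a\<in>UNIV. \<Sum>b\<in>UNIV. ?t a b d * (c1 a b p * c2 p d e))"
    unfolding amult_def by (simp add: sum_distrib_left sum_distrib_right ac_simps)
  also have "\<dots> = (\<Sum>a\<in>UNIV. \<Sum>b\<in>UNIV. \<Sum>d\<in>UNIV. \<Sum>p\<in>UNIV. ?t a b d * (c1 a b p * c2 p d e))"
    by (rule sum_reverse4)
  also have "\<dots> = (\<Sum>a\<in>UNIV. \<Sum>b\<in>UNIV. \<Sum>d\<in>UNIV. \<Sum>q\<in>UNIV. ?t a b d * (c3 b d q * c4 a q e))"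
    by (simp add: assms flip: sum_distrib_left)
  also have "\<dots> = (\<Sum>a\<in>UNIV. \<Sum>q\<in>UNIV. \<Sum>b\<in>UNIV. \<Sum>d\<in>UNIV. ?t a b d * (c3 b d q * c4 a q e))"
    by (rule sum.cong[OF refl trans[OF sum_swap_inner sum.swap]])
  also have "\<dots> = amult c4 x (amult c3 y z) e"
    unfolding amult_def by (simp add: sum_distrib_left sum_distrib_right ac_simps)
  finally show "amult c2 (amult c1 x y) z e = amult c4 x (amult c3 y z) e" .
qed

lemma amult_left_unit_by_constants:
  assumes "\<And>b e. (\<Sum>a\<in>UNIV. u a * c a b e) = (if e = b then 1 else 0)"
  shows "amult c u z = z"
  by (simp add: fun_eq_iff amult_left_apply assms if_distrib cong: if_cong)

lemma amult_right_unit_by_constants: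
  assumes "\<And>a e. (\<Sum>b\<in>UNIV. u b * c a b e) = (if e = a then 1 else 0)"
  shows "amult c z u = z"
  by (simp add: fun_eq_iff amult_right_apply assms if_distrib cong: if_cong)

lemma sum_UNIV_if: "(\<Sum>x\<in>(UNIV::'a::finite set). if P x then f x else 0) = sum f {x. P x}"
  using sum.inter_filter[of UNIV f P] by simp

lemma left_idealD:
  assumes "left_ideal c I"
  shows left_ideal_add: "x \<in> I \<Longrightarrow> y \<in> I \<Longrightarrow> x + y \<in> I"
    and left_ideal_scale: "x \<in> I \<Longrightarrow> (\<lambda>b. a * x b) \<in> I"
    and left_ideal_amult: "x \<in> I \<Longrightarrow> amult c y x \<in> I"
  using assms unfolding left_ideal_def by blast+

lemma left_ideal_diff:
  assumes "left_ideal c I" "x \<in> I" "y \<in> I"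
  shows "x - y \<in> I"
proof -
  have "x + (\<lambda>b. (-1) * y b) \<in> I"
    using assms by (intro left_ideal_add left_ideal_scale)
  moreover have "x + (\<lambda>b. (-1) * y b) = x - y"
    by (simp add: fun_eq_iff)
  ultimately show ?thesis
    by (simp only:)
qed

lemma semisimple_left_ideal_right_unit:
  assumes "semisimple c" and I: "left_ideal c I" and unit: "\<And>x. amult c x e = x"
  obtains u where "u \<in> I" "\<And>x. x \<in> I \<Longrightarrow> amult c x u = x"
proof -
  obtain J where J: "left_ideal c J" "I \<inter> J = {0}" and split: "\<forall>x. \<exists>u\<in>I. \<exists>w\<in>J. x = u + w"
    using assms(1)[unfolded semisimple_def, rule_format, OF I] by fast
  from split[rule_format, of e] obtain u w where u: "u \<in> I" and w: "w \<in> J" and uw: "e = u + w"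
    by blast
  have "amult c x u = x" if x: "x \<in> I" for x
  proof -
    have x_split: "amult c x u + amult c x w = x"
      using unit[of x] by (simp add: uw amult_add_right)
    have "amult c x w = x - amult c x u"
      unfolding eq_diff_eq using x_split by (simp only: add.commute)
    also have "\<dots> \<in> I"
      using I x u by (intro left_ideal_diff left_ideal_amult)
    finally have "amult c x w \<in> I \<inter> J"
      using J(1) w by (simp add: left_ideal_amult)
    with J(2) x_split show ?thesis by simp
  qed
  with u that show thesis by blast
qed

lemma surj_if_inj_linear_fun:
  fixes f :: "('b::finite \<Rightarrow> 'K::field) \<Rightarrow> ('b \<Rightarrow> 'K)"
  assumes add: "\<And>x y. f (x + y) = f x + f y"
    and scale: "\<And>a x. f (\<lambda>b. a * x b) = (\<lambda>b. a * f x b)"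
    and "inj f"
  shows "surj f"
proof -
  define g :: "'K^'b \<Rightarrow> 'K^'b" where "g v = vec_lambda (f (vec_nth v))" for v
  have nth_add: "vec_nth (v + w) = vec_nth v + vec_nth w" for v w :: "'K^'b"
    by (simp add: fun_eq_iff)
  have nth_scale: "vec_nth (a *s v) = (\<lambda>i. a * v $ i)" for a and v :: "'K^'b"
    by (simp add: fun_eq_iff)
  have "Vector_Spaces.linear (*s) (*s) g"
    unfolding Vector_Spaces.linear_iff
    by (simp add: vec.vector_space_axioms g_def add scale nth_add nth_scale vec_eq_iff)
  moreover have "inj g"
  proof (rule injI)
    fix v w
    assume "g v = g w"
    then have "f (vec_nth v) = f (vec_nth w)"
      by (simp add: g_def vec_lambda_inject)
    with \<open>inj f\<close> show "v = w"
      by (simp add: inj_eq vec_nth_inject)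
  qed
  ultimately have "surj g"
    by (rule vec.linear_inj_imp_surj)
  show ?thesis
    unfolding surj_def
  proof
    fix y
    obtain v where "g v = vec_lambda y"
      using \<open>surj g\<close> by (metis surjD)
    then have "y = f (vec_nth v)"
      by (simp add: g_def vec_lambda_inject)
    then show "\<exists>x. y = f x" by blast
  qed
qed

section \<open>Laurent polynomials\<close>

lemma laurent_iff_eventually_zero: "f \<in> laurent \<longleftrightarrow> (\<exists>N. \<forall>n>N. fls_nth f n = 0)"
proof
  assume "f \<in> laurent"
  then have "bdd_above {n. fls_nth f n \<noteq> 0}"
    by (simp add: laurent_def bdd_above_finite)
  then show "\<exists>N. \<forall>n>N. fls_nth f n = 0"
    by (meson bdd_above_def mem_Collect_eq not_le)
next
  assume "\<exists>N. \<forall>n>N. fls_nth f n = 0"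
  then obtain N where "\<forall>n>N. fls_nth f n = 0" by blast
  then have "{n. fls_nth f n \<noteq> 0} \<subseteq> {fls_subdegree f..N}"
    using fls_subdegree_leI by (auto simp: not_less[symmetric])
  then show "f \<in> laurent" unfolding laurent_def by (auto intro: finite_subset)
qed

lemma laurent_add: "a \<in> laurent \<Longrightarrow> b \<in> laurent \<Longrightarrow> a + b \<in> laurent"
  unfolding laurent_def mem_Collect_eq
  by (rule finite_subset[of _ "{n. fls_nth a n \<noteq> 0} \<union> {n. fls_nth b n \<noteq> 0}"]) auto

lemma laurent_const [simp]: "fls_const k \<in> laurent"
  unfolding laurent_iff_eventually_zero by (auto intro: exI[of _ 0])

lemma laurent_zero [simp]: "0 \<in> laurent"
  using laurent_const[of 0] by simp

lemma laurent_one [simp]: "1 \<in> laurent"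
  using laurent_const[of 1] by simp

lemma laurent_mult: "a \<in> laurent \<Longrightarrow> b \<in> laurent \<Longrightarrow> a * b \<in> laurent"
proof -
  assume "a \<in> laurent" "b \<in> laurent"
  then obtain Na Nb where Na: "\<forall>n>Na. fls_nth a n = 0" and Nb: "\<forall>n>Nb. fls_nth b n = 0"
    unfolding laurent_iff_eventually_zero by blast
  have "fls_nth (a * b) n = 0" if "n > Na + Nb" for n
  proof -
    have "fls_nth a i * fls_nth b (n - i) = 0" for i
      using Na Nb that by (cases "i > Na") auto
    then show ?thesis
      unfolding fls_times_nth(2) by (blast intro: sum.neutral)
  qed
  then show ?thesis unfolding laurent_iff_eventually_zero by blast
qed

lemma laurent_sum: "(\<And>i. i \<in> S \<Longrightarrow> f i \<in> laurent) \<Longrightarrow> sum f S \<in> laurent"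
  by (induction S rule: infinite_finite_induct) (auto intro: laurent_add)

lemma fls_nth_ev_v':
  assumes "f \<in> laurent"
  shows "fls_nth (ev_v' f) m = fls_const (fls_nth f m)"
proof -
  let ?S = "{n. fls_nth f n \<noteq> 0}"
  have "fls_nth (ev_v' f) m = (\<Sum>j\<in>?S. if m = j then fls_const (fls_nth f j) else 0)"
    unfolding ev_v'_def fls_nth_sum by (intro sum.cong) (auto simp: fls_X_intpow_times_conv_shift)
  also have "\<dots> = fls_const (fls_nth f m)"
    using assms by (simp add: laurent_def)
  finally show ?thesis .
qed

lemma laurent_hom_one: "laurent_hom \<phi> \<Longrightarrow> \<phi> 1 = 1"
  and laurent_hom_add: "laurent_hom \<phi> \<Longrightarrow> a \<in> laurent \<Longrightarrow> b \<in> laurent \<Longrightarrow> \<phi> (a + b) = \<phi> a + \<phi> b"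
  and laurent_hom_mult: "laurent_hom \<phi> \<Longrightarrow> a \<in> laurent \<Longrightarrow> b \<in> laurent \<Longrightarrow> \<phi> (a * b) = \<phi> a * \<phi> b"
  unfolding laurent_hom_def by blast+

lemma laurent_hom_zero: "laurent_hom \<phi> \<Longrightarrow> \<phi> 0 = 0"
  using laurent_hom_add[of \<phi> 0 0] by (metis laurent_zero add_0 add_cancel_right_right)

lemma laurent_hom_sum:
  "laurent_hom \<phi> \<Longrightarrow> (\<And>i. i \<in> S \<Longrightarrow> f i \<in> laurent) \<Longrightarrow> \<phi> (sum f S) = (\<Sum>i\<in>S. \<phi> (f i))"
  by (induction S rule: infinite_finite_induct)
    (auto simp: laurent_hom_zero laurent_hom_add laurent_sum)

lemma laurent_hom_of_nat: "laurent_hom \<phi> \<Longrightarrow> \<phi> (of_nat n) = of_nat n"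
proof (induction n)
  case 0
  then show ?case by (simp add: laurent_hom_zero)
next
  case (Suc n)
  have "of_nat n \<in> laurent"
    using laurent_const[of "of_nat n"] by (simp add: fls_of_nat)
  with Suc show ?case by (simp add: laurent_hom_add laurent_hom_one)
qed

lemma laurent_hom_const:
  assumes "laurent_hom \<phi>"
  shows "\<phi> (fls_const k) = of_int k"
proof (cases k rule: int_cases2)
  case (nonneg n)
  then have "fls_const k = of_nat n"
    by (simp add: fls_of_nat)
  with nonneg assms show ?thesis
    by (simp add: laurent_hom_of_nat)
next
  case (nonpos n)
  have n: "of_nat n \<in> laurent"
    using laurent_const[of "of_nat n"] by (simp add: fls_of_nat)
  have "fls_const k + of_nat n = 0"
    using nonpos by (simp add: fls_of_nat)
  then have "\<phi> (fls_const k) + \<phi> (of_nat n) = 0"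
    using assms n by (metis laurent_const laurent_hom_add laurent_hom_zero)
  with assms have "\<phi> (fls_const k) = - of_nat n"
    by (simp add: laurent_hom_of_nat eq_neg_iff_add_eq_0)
  with nonpos show ?thesis
    by simp
qed

section \<open>Cells\<close>

lemma cle_refl: "cle r b b"
  by (simp add: cle_def)

lemma cle_trans: "cle r a b \<Longrightarrow> cle r b c \<Longrightarrow> cle r a c"
  unfolding cle_def by blast

lemma cellrel_refl: "cellrel r b b"
  by (simp add: cellrel_def cle_refl)

lemma cellrel_sym: "cellrel r a b \<Longrightarrow> cellrel r b a"
  by (simp add: cellrel_def)

lemma cellrel_trans: "cellrel r a b \<Longrightarrow> cellrel r b c \<Longrightarrow> cellrel r a c"
  unfolding cellrel_def using cle_trans by blast

lemma bvec_in_Aelts [simp]: "bvec b \<in> Aelts"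
  by (simp add: Aelts_def bvec_def)

lemma cle_if_structure_constant_nonzero:
  fixes r :: "'b::finite \<Rightarrow> 'b \<Rightarrow> 'b \<Rightarrow> int fls"
  assumes "r b b2 \<beta> \<noteq> 0"
  shows "cle r \<beta> b2"
  unfolding cle_def
proof (intro allI impI)
  fix K
  assume K: "b2 \<in> K \<and> span_is_ideal r K"
  then have "bvec b2 \<in> lspan K"
    by (simp add: lspan_def bvec_def)
  with K have "amult r (bvec b) (bvec b2) \<in> lspan K"
    unfolding span_is_ideal_def by simp
  with assms show "\<beta> \<in> K"
    unfolding lspan_def by (auto simp: amult_bvec_bvec)
qed

section \<open>The homomorphism \<open>\<Phi>\<^sub>K\<close>\<close>

locale specialized_based_algebra =
  fixes r :: "'b::finite \<Rightarrow> 'b \<Rightarrow> 'b \<Rightarrow> int fls"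
    and U D :: "'b set"
    and \<phi> :: "int fls \<Rightarrow> 'K::field"
  assumes r_laurent: "\<forall>b b' b''. r b b' b'' \<in> laurent"
    and assoc: "\<forall>x\<in>Aelts. \<forall>y\<in>Aelts. \<forall>z\<in>Aelts. amult r (amult r x y) z = amult r x (amult r y z)"
    and one: "compat_one r Aelts U"
    and P1: "P1 r" and P2: "P2 r D" and P3: "P3 r"
    and hom: "laurent_hom \<phi>"
begin

definition rK :: "'b \<Rightarrow> 'b \<Rightarrow> 'b \<Rightarrow> 'K" where
  "rK b b' b'' = \<phi> (r b b' b'')"

text \<open>Structure constants of the action of \<open>A\<^sub>K\<close> on \<open>J\<^sub>K\<close>: the regular representation
  with the coefficients outside the cell of \<open>b2\<close> removed.\<close>
definition cell_act :: "'b \<Rightarrow> 'b \<Rightarrow> 'b \<Rightarrow> 'K" where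
  "cell_act b b2 \<beta> = (if cellrel r b2 \<beta> then rK b b2 \<beta> else 0)"

definition gamK :: "'b \<Rightarrow> 'b \<Rightarrow> 'b \<Rightarrow> 'K" where
  "gamK b b' b'' = of_int (gam r b b' b'')"

abbreviation Phi :: "('b \<Rightarrow> 'K) \<Rightarrow> ('b \<Rightarrow> 'K)" where
  "Phi \<equiv> PhiK \<phi> r D"

lemma r_in_laurent [simp]: "r a b e \<in> laurent"
  using r_laurent by blast

lemma \<phi>_sum_products:
  assumes "\<And>i. i \<in> S \<Longrightarrow> f i \<in> laurent" "\<And>i. i \<in> S \<Longrightarrow> g i \<in> laurent"
  shows "\<phi> (\<Sum>i\<in>S. f i * g i) = (\<Sum>i\<in>S. \<phi> (f i) * \<phi> (g i))"
  using assms by (simp add: laurent_hom_sum[OF hom] laurent_mult laurent_hom_mult[OF hom])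

lemma \<phi>_indicator: "\<phi> (if P then 1 else 0) = (if P then 1 else 0)"
  by (simp add: laurent_hom_one[OF hom] laurent_hom_zero[OF hom])

lemma cle_if_rK_nonzero: "rK a b e \<noteq> 0 \<Longrightarrow> cle r e b"
  using laurent_hom_zero[OF hom] cle_if_structure_constant_nonzero
  unfolding rK_def by metis

lemma rK_assoc: "(\<Sum>p\<in>UNIV. rK a b p * rK p d e) = (\<Sum>q\<in>UNIV. rK b d q * rK a q e)"
proof -
  have "amult r (amult r (bvec a) (bvec b)) (bvec d) e = amult r (bvec a) (amult r (bvec b) (bvec d)) e"
    using assoc by simp
  then have "\<phi> (\<Sum>p\<in>UNIV. r a b p * r p d e) = \<phi> (\<Sum>q\<in>UNIV. r b d q * r a q e)"
    by (simp add: amult_bvec_bvec amult_bvec_left amult_bvec_right)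
  then show ?thesis
    by (simp add: \<phi>_sum_products rK_def)
qed

lemma amult_rK_assoc: "amult rK (amult rK x y) z = amult rK x (amult rK y z)"
  by (rule amult_assoc_by_constants) (rule rK_assoc)

lemma rK_left_unit_U: "(\<Sum>a\<in>UNIV. indic U a * rK a b e) = (if e = b then 1 else 0)"
proof -
  have "amult r (indic U) (bvec b) = bvec b"
    using one by (simp add: compat_one_def)
  then have "\<phi> (\<Sum>a\<in>UNIV. indic U a * r a b e) = \<phi> (bvec b e)"
    by (metis amult_bvec_right)
  then show ?thesis
    by (simp add: \<phi>_sum_products rK_def indic_def bvec_def \<phi>_indicator)
qed

lemma rK_right_unit_U: "(\<Sum>b\<in>UNIV. indic U b * rK a b e) = (if e = a then 1 else 0)"
proof -
  have "amult r (bvec a) (indic U) = bvec a"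
    using one by (simp add: compat_one_def)
  then have "\<phi> (\<Sum>b\<in>UNIV. indic U b * r a b e) = \<phi> (bvec a e)"
    by (metis amult_bvec_left)
  then show ?thesis
    by (simp add: \<phi>_sum_products rK_def indic_def bvec_def \<phi>_indicator)
qed

lemma amult_rK_unit_right: "amult rK x (indic U) = x"
  by (rule amult_right_unit_by_constants) (rule rK_right_unit_U)

lemma amult_cell_act_unit: "amult cell_act (indic U) z = z"
proof (rule amult_left_unit_by_constants)
  fix b e
  have "(\<Sum>a\<in>UNIV. indic U a * cell_act a b e)
      = (if cellrel r b e then (\<Sum>a\<in>UNIV. indic U a * rK a b e) else 0)"
    by (simp add: cell_act_def)
  then show "(\<Sum>a\<in>UNIV. indic U a * cell_act a b e) = (if e = b then 1 else 0)"
    by (simp add: rK_left_unit_U cellrel_refl)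
qed

lemma amult_gamK_unit: "amult gamK (indic D) z = z"
proof (rule amult_left_unit_by_constants)
  fix b e
  have "amult (gam r) (indic D) (bvec b) = bvec b"
    using P2 by (simp add: P2_def compat_one_def)
  then have "of_int (\<Sum>a\<in>UNIV. indic D a * gam r a b e) = (of_int (bvec b e) :: 'K)"
    by (metis amult_bvec_right)
  moreover have "(of_int (indic D a) :: 'K) = indic D a" for a
    by (simp add: indic_def)
  ultimately show "(\<Sum>a\<in>UNIV. indic D a * gamK a b e) = (if e = b then 1 else 0)"
    by (simp add: gamK_def of_int_sum bvec_def)
qed

lemma cell_act_assoc:
  "(\<Sum>p\<in>UNIV. rK a b p * cell_act p d e) = (\<Sum>q\<in>UNIV. cell_act b d q * cell_act a q e)"
proof (cases "cellrel r d e")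
  case True
  have "cell_act b d q * cell_act a q e = rK b d q * rK a q e" for q
  proof (cases "rK b d q = 0 \<or> rK a q e = 0")
    case False
    then have "cle r q d" "cle r e q"
      by (auto intro: cle_if_rK_nonzero)
    with True have "cellrel r d q" "cellrel r q e"
      unfolding cellrel_def by (blast intro: cle_trans)+
    then show ?thesis
      by (simp add: cell_act_def)
  qed (auto simp: cell_act_def)
  moreover have "cell_act p d e = rK p d e" for p
    using True by (simp add: cell_act_def)
  ultimately show ?thesis
    by (simp add: rK_assoc)
next
  case False
  then have "cell_act b d q * cell_act a q e = 0" "cell_act q d e = 0" for q
    using cellrel_trans[of r d q e] by (auto simp: cell_act_def)
  then show ?thesis
    by (simp only: mult_zero_right sum.neutral_const)
qed

lemma amult_cell_act_assoc: "amult cell_act (amult rK x y) z = amult cell_act x (amult cell_act y z)"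
  by (rule amult_assoc_by_constants) (rule cell_act_assoc)

text \<open>The coefficient of \<open>v'\<^sup>m\<close> in \<open>P\<^sub>3\<close>, specialized along \<open>\<phi>\<close>.\<close>
lemma P3_coefficient:
  assumes "cellrel r b e"
  shows "(\<Sum>\<beta>\<in>{\<beta>. cellrel r \<beta> b}. rK a b \<beta> * of_int (fls_nth (r \<beta> d e) m))
       = (\<Sum>\<beta>\<in>{\<beta>. cellrel r \<beta> b}. rK a \<beta> e * of_int (fls_nth (r b d \<beta>) m))"
proof -
  let ?C = "{\<beta>. cellrel r \<beta> b}"
  have "(\<Sum>\<beta>\<in>?C. ev_v (r a b \<beta>) * ev_v' (r \<beta> d e)) = (\<Sum>\<beta>\<in>?C. ev_v (r a \<beta> e) * ev_v' (r b d \<beta>))"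
    using P3 assms unfolding P3_def by blast
  then have "fls_nth (\<Sum>\<beta>\<in>?C. ev_v (r a b \<beta>) * ev_v' (r \<beta> d e)) m
      = fls_nth (\<Sum>\<beta>\<in>?C. ev_v (r a \<beta> e) * ev_v' (r b d \<beta>)) m"
    by simp
  then have "\<phi> (\<Sum>\<beta>\<in>?C. r a b \<beta> * fls_const (fls_nth (r \<beta> d e) m))
      = \<phi> (\<Sum>\<beta>\<in>?C. r a \<beta> e * fls_const (fls_nth (r b d \<beta>) m))"
    unfolding fls_nth_sum ev_v_def fls_mult_const_nth by (simp add: fls_nth_ev_v')
  then show ?thesis
    by (simp add: \<phi>_sum_products rK_def laurent_hom_const[OF hom])
qed

lemma afun_cell: "cellrel r b p \<Longrightarrow> afun r p = afun r b"
  using P1 unfolding P1_def by (metis cellrel_sym)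

lemma gamK_eq:
  "gamK p d e = (if cellrel r p d \<and> cellrel r p e then of_int (fls_nth (r p d e) (int (afun r p))) else 0)"
  by (simp add: gamK_def gam_def)

lemma cell_act_gamK:
  "cell_act a b p * gamK p d e = (if cellrel r p b \<and> cellrel r b d \<and> cellrel r b e
     then rK a b p * of_int (fls_nth (r p d e) (int (afun r b))) else 0)"
proof (cases "cellrel r p b \<and> cellrel r b d \<and> cellrel r b e")
  case True
  then have "cellrel r b p" "cellrel r p d" "cellrel r p e"
    using cellrel_sym cellrel_trans by blast+
  with True show ?thesis
    by (simp add: cell_act_def gamK_eq afun_cell)
next
  case False
  then have "\<not> cellrel r b p \<or> \<not> cellrel r p d \<or> \<not> cellrel r p e"
    using cellrel_sym cellrel_trans by blast
  with False show ?thesis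
    by (auto simp: cell_act_def gamK_eq)
qed

lemma gamK_cell_act:
  "gamK b d q * cell_act a q e = (if cellrel r q b \<and> cellrel r b d \<and> cellrel r b e
     then rK a q e * of_int (fls_nth (r b d q) (int (afun r b))) else 0)"
proof (cases "cellrel r q b \<and> cellrel r b d \<and> cellrel r b e")
  case True
  then have "cellrel r b q" "cellrel r q e"
    using cellrel_sym cellrel_trans by blast+
  with True show ?thesis
    by (simp add: cell_act_def gamK_eq mult.commute)
next
  case False
  then have "\<not> cellrel r b d \<or> \<not> cellrel r b q \<or> \<not> cellrel r q e"
    using cellrel_sym cellrel_trans by blast
  with False show ?thesis
    by (auto simp: cell_act_def gamK_eq)
qed

lemma cell_act_gamK_assoc:
  "(\<Sum>p\<in>UNIV. cell_act a b p * gamK p d e) = (\<Sum>q\<in>UNIV. gamK b d q * cell_act a q e)"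
proof (cases "cellrel r b d \<and> cellrel r b e")
  case True
  then show ?thesis
    unfolding cell_act_gamK gamK_cell_act
    using P3_coefficient[of b e a d "int (afun r b)"] by (simp add: sum_UNIV_if)
next
  case False
  then have "(cellrel r b d \<and> cellrel r b e) = False"
    by simp
  then show ?thesis
    unfolding cell_act_gamK gamK_cell_act by (simp only: simp_thms if_False sum.neutral_const)
qed

lemma amult_cell_act_gamK_assoc: "amult gamK (amult cell_act x y) z = amult cell_act x (amult gamK y z)"
  by (rule amult_assoc_by_constants) (rule cell_act_gamK_assoc)

lemma Phi_eq_act_one: "Phi x = amult cell_act x (indic D)"
proof
  fix b2
  have "(\<Sum>b1\<in>{b1\<in>D. cellrel r b1 b2}. \<phi> (r b b1 b2)) = (\<Sum>b1\<in>UNIV. indic D b1 * cell_act b b1 b2)" for b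
  proof -
    have "(\<Sum>b1\<in>UNIV. indic D b1 * cell_act b b1 b2)
        = (\<Sum>b1\<in>UNIV. if b1 \<in> D \<and> cellrel r b1 b2 then rK b b1 b2 else 0)"
      by (rule sum.cong) (auto simp: indic_def cell_act_def)
    then show ?thesis
      by (simp only: sum_UNIV_if rK_def)
  qed
  then show "Phi x b2 = amult cell_act x (indic D) b2"
    by (simp add: PhiK_def amult_right_apply)
qed

lemma amult_cell_act_eq: "amult cell_act x z = amult gamK (Phi x) z"
proof -
  have "amult cell_act x z = amult cell_act x (amult gamK (indic D) z)"
    by (simp add: amult_gamK_unit)
  also have "\<dots> = amult gamK (Phi x) z"
    by (simp add: Phi_eq_act_one amult_cell_act_gamK_assoc)
  finally show ?thesis .
qed

lemma Phi_mult: "Phi (amult rK x y) = amult gamK (Phi x) (Phi y)"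
proof -
  have "Phi (amult rK x y) = amult cell_act x (Phi y)"
    by (simp add: Phi_eq_act_one amult_cell_act_assoc)
  also have "\<dots> = amult gamK (Phi x) (Phi y)"
    by (rule amult_cell_act_eq)
  finally show ?thesis .
qed

lemma Phi_one: "Phi (indic U) = indic D"
  by (simp add: Phi_eq_act_one amult_cell_act_unit)

lemma Phi_add: "Phi (x + y) = Phi x + Phi y"
  by (simp add: Phi_eq_act_one amult_add_left)

lemma Phi_diff: "Phi (x - y) = Phi x - Phi y"
  by (simp add: Phi_eq_act_one amult_diff_left)

lemma Phi_scale: "Phi (\<lambda>b. a * x b) = (\<lambda>b. a * Phi x b)"
  by (simp add: Phi_eq_act_one amult_scale_left)

lemma left_ideal_ker_Phi: "left_ideal rK {x. Phi x = 0}"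
  unfolding left_ideal_def
proof (intro conjI ballI allI)
  show "0 \<in> {x. Phi x = 0}"
    by (simp add: Phi_eq_act_one)
  show "x + y \<in> {x. Phi x = 0}" if "x \<in> {x. Phi x = 0}" "y \<in> {x. Phi x = 0}" for x y
    using that by (simp add: Phi_add)
  show "(\<lambda>b. a * x b) \<in> {x. Phi x = 0}" if "x \<in> {x. Phi x = 0}" for x a
    using that by (simp add: Phi_scale fun_eq_iff)
  show "amult rK y x \<in> {x. Phi x = 0}" if "x \<in> {x. Phi x = 0}" for x y
    using that by (simp add: Phi_mult)
qed

lemma ker_Phi_kills_cell:
  assumes "Phi u = 0" "cellrel r b \<beta>"
  shows "(\<Sum>a\<in>UNIV. u a * rK a b \<beta>) = 0"
proof -
  have "amult cell_act u (bvec b) \<beta> = 0"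
    using amult_cell_act_eq[of u "bvec b"] assms(1) by simp
  with assms(2) show ?thesis
    by (simp add: amult_bvec_right cell_act_def)
qed

definition height :: "'b \<Rightarrow> nat" where
  "height b = card {\<gamma>. cle r \<gamma> b}"

lemma height_less: "cle r \<beta> b \<Longrightarrow> \<not> cle r b \<beta> \<Longrightarrow> height \<beta> < height b"
  unfolding height_def by (rule psubset_card_mono) (auto intro: cle_trans cle_refl)

text \<open>Multiplication by \<open>u\<close> lowers the height of the support; idempotence lets us iterate.\<close>
lemma idempotent_in_ker_Phi_annihilates:
  assumes ker: "Phi u = 0" and idem: "amult rK u u = u"
    and "\<forall>b. y b \<noteq> 0 \<longrightarrow> height b < n"
  shows "amult rK u y = 0"
  using assms(3)
proof (induction n arbitrary: y)
  case 0
  then have "y = 0" by (auto simp: fun_eq_iff)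
  then show ?case by (simp only: amult_zero_right)
next
  case (Suc n)
  have "height \<beta> < n" if nz: "amult rK u y \<beta> \<noteq> 0" for \<beta>
  proof -
    from nz obtain b where "y b * (\<Sum>a\<in>UNIV. u a * rK a b \<beta>) \<noteq> 0"
      unfolding amult_left_apply by (metis (mono_tags, lifting) sum.neutral)
    then have yb: "y b \<noteq> 0" and S: "(\<Sum>a\<in>UNIV. u a * rK a b \<beta>) \<noteq> 0"
      by auto
    from S obtain a where "u a * rK a b \<beta> \<noteq> 0"
      by (metis (mono_tags, lifting) sum.neutral)
    then have le: "cle r \<beta> b"
      by (auto intro: cle_if_rK_nonzero)
    with S ker_Phi_kills_cell[OF ker] have "\<not> cle r b \<beta>"
      unfolding cellrel_def by blast
    with le have "height \<beta> < height b"
      by (rule height_less)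
    with Suc.prems yb show ?thesis
      by fastforce
  qed
  then have "amult rK u (amult rK u y) = 0"
    by (intro Suc.IH) blast
  then show ?case
    by (simp add: idem flip: amult_rK_assoc)
qed

lemma height_bound: "height b < Suc (card (UNIV :: 'b set))"
  unfolding height_def using card_mono[of UNIV "{\<gamma>. cle r \<gamma> b}"] by simp

lemma ker_Phi_trivial:
  assumes "semisimple rK" "Phi x = 0"
  shows "x = 0"
proof -
  obtain u where "u \<in> {x. Phi x = 0}"
    and right_unit: "\<And>x. x \<in> {x. Phi x = 0} \<Longrightarrow> amult rK x u = x"
    using semisimple_left_ideal_right_unit[OF assms(1) left_ideal_ker_Phi amult_rK_unit_right]
    by blast
  then have u: "Phi u = 0" and idem: "amult rK u u = u"
    by simp_all
  have "amult rK u (indic U) = 0"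
    using idempotent_in_ker_Phi_annihilates[OF u idem, where n = "Suc (card (UNIV :: 'b set))"]
    by (simp add: height_bound)
  then have "u = 0"
    by (simp add: amult_rK_unit_right)
  with right_unit[of x] assms(2) show "x = 0"
    by simp
qed

lemma inj_Phi:
  assumes "semisimple rK"
  shows "inj Phi"
proof (rule injI)
  fix x y
  assume "Phi x = Phi y"
  then have "Phi (x - y) = 0"
    by (simp add: Phi_diff)
  then have "x - y = 0"
    by (rule ker_Phi_trivial[OF assms])
  then show "x = y"
    by simp
qed

end

theorem mainTheorem7:
  fixes r :: "'b::finite \<Rightarrow> 'b \<Rightarrow> 'b \<Rightarrow> int fls"
    and U D :: "'b set"
    and \<phi> :: "int fls \<Rightarrow> 'K::field"
  assumes r_laurent: "\<forall>b b' b''. r b b' b'' \<in> laurent"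
    and assoc: "\<forall>x\<in>Aelts. \<forall>y\<in>Aelts. \<forall>z\<in>Aelts. amult r (amult r x y) z = amult r x (amult r y z)"
    and one: "compat_one r Aelts U"
    and "P1 r" and "P2 r D" and "P3 r"
    and hom: "laurent_hom \<phi>"
    and ss: "semisimple (\<lambda>b b' b''. \<phi> (r b b' b''))"
  shows "bij (PhiK \<phi> r D)
    \<and> (\<forall>x y. PhiK \<phi> r D (x + y) = PhiK \<phi> r D x + PhiK \<phi> r D y)
    \<and> (\<forall>a x. PhiK \<phi> r D (\<lambda>b. a * x b) = (\<lambda>b. a * PhiK \<phi> r D x b))
    \<and> (\<forall>x y. PhiK \<phi> r D (amult (\<lambda>b b' b''. \<phi> (r b b' b'')) x y)
             = amult (\<lambda>b b' b''. of_int (gam r b b' b'')) (PhiK \<phi> r D x) (PhiK \<phi> r D y))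
    \<and> PhiK \<phi> r D (indic U) = indic D"
proof -
  interpret specialized_based_algebra r U D \<phi>
    using assms by unfold_locales auto
  have constants: "(\<lambda>b b' b''. \<phi> (r b b' b'')) = rK" "(\<lambda>b b' b''. of_int (gam r b b' b'')) = gamK"
    by (simp_all add: fun_eq_iff rK_def gamK_def)
  have "inj Phi"
    using ss by (simp add: constants inj_Phi)
  moreover have "surj Phi"
    using \<open>inj Phi\<close> by (rule surj_if_inj_linear_fun[OF Phi_add Phi_scale])
  ultimately show ?thesis
    by (simp add: constants bij_def Phi_add Phi_scale Phi_mult Phi_one)
qed

end
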